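(* Fix an execution path of naive-fvs$(G,k,\emptyset)$ that leads to a solution, with $V_-=\{x_1,\dots,x_s\}$, $F'$, $d^*$ and $\delta$ as defined in the context. For every $u\in F'$ and every $i\in\{1,\dots,s\}$, if $\delta(u,x_i)>0$ then $d^*(u)\ge d^*(x_i)$.
   Context: All graphs are finite, simple and undirected; $d_G(v)$ denotes the degree of $v$ in $G$ (taken to be $0$ if $v\notin V(G)$), $G-S$ denotes deletion of a vertex set $S$, and $G[S]$ the induced subgraph. A feedback vertex set of $G$ is a set $V_-\subseteq V(G)$ such that $G-V_-$ is a forest. Algorithm naive-fvs$(G,k,F)$ (with $k$ an integer and $F\subseteq V(G)$ inducing a forest) returns a set of vertices or ``NO'' as follows (all choices among several candidates are arbitrary; degrees are in the current graph $G$): (0) If $k<0$ return NO; if $V(G)=\emptyset$ return $\emptyset$. (1) If some vertex $v$ has degree less than $2$, return naive-fvs$(G-\{v\},k,F\setminus\{v\})$. (2) If some $v\in V(G)\setminus F$ has two neighbors in the same connected component of $G[F]$, let $X=$ naive-fvs$(G-\{v\},k-1,F)$ and return $X\cup\{v\}$ (NO if $X$ is NO). (3) Pick $v\in V(G)\setminus F$ of maximum degree. (4) If $d(v)=2$: set $X=\emptyset$; while $G$ contains a cycle $C$, take any vertex $x$ of $C$ not in $F$, add $x$ to $X$ and delete $x$ from $G$; then return $X$ if $|X|\le k$, else NO. (5) Let $X=$ naive-fvs$(G-\{v\},k-1,F)$; if $X$ is not NO, return $X\cup\{v\}$. (6) Return naive-fvs$(G,k,F\cup\{v\})$. An execution path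 is a sequence of calls $c_0,c_1,\dots,c_t$ where $c_0=$ naive-fvs$(G,k,\emptyset)$; for each $j<t$, $c_{j+1}$ is the recursive call made by $c_j$ in step 1 or step 2, or, if $c_j$ reaches step 5, either the call of step 5 or the call of step 6 (the latter considered even if the algorithm would not actually make it); and $c_t$ terminates in step 0 or step 4 without recursion. It leads to a solution if $c_t$ returns a set (not NO). Along the path, vertices are deleted from the current graph one at a time (in steps 1, 2, 5 and in the loop of step 4 of $c_t$). $V_-$ denotes the set of vertices deleted in step 2, in step 5 (when the path follows the step-5 call), and in the loop of step 4 of $c_t$; $F'$ denotes the set of vertices added to $F$ by step 6 (when the path follows the step-6 call). Let $x_1,\dots,x_s$ be the vertices of $V_-$ in the order they are deleted. For $v\in V_-\cup F'$, $d^*(v)$ is the degree of $v$ in the current graph at the moment $v$ is deleted (for $v\in V_-$) or moved into $F$ (for $v\in F'$). Let $G_i$ and $F_i$ be the current graph and current set $F$ immediately before $x_i$ is deleted, and let $G_{s+1}$ be the current graph at the end of the path. For $u\in F'$ and $1\le i\le s$, the number of effective decrements of $u$ incurred by $x_i$ is $\delta(u,x_i)=\max\{d_{G_i}(u),2\}-\max\{d_{G_{i+1}}(u),2\}$ if $u\in F_i$, and $\delta(u,x_i)=0$ otherwise. *)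

theory Defs
  imports Main
begin

type_synonym 'a graph = "'a set \<times> 'a set set"

definition verts :: "'a graph \<Rightarrow> 'a set" where "verts G = fst G"
definition edges :: "'a graph \<Rightarrow> 'a set set" where "edges G = snd G"

definition wf_graph :: "'a graph \<Rightarrow> bool" where
  "wf_graph G \<longleftrightarrow> finite (verts G) \<and> (\<forall>e\<in>edges G. card e = 2 \<and> e \<subseteq> verts G)"

definition adj :: "'a graph \<Rightarrow> 'a \<Rightarrow> 'a \<Rightarrow> bool" where
  "adj G u v \<longleftrightarrow> u \<noteq> v \<and> {u, v} \<in> edges G"

definition deg :: "'a graph \<Rightarrow> 'a \<Rightarrow> nat" where
  "deg G v = (if v \<in> verts G then card {e \<in> edges G. v \<in> e} else 0)"

definition del :: "'a graph \<Rightarrow> 'a set \<Rightarrow> 'a graph" where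
  "del G S = (verts G - S, {e \<in> edges G. e \<inter> S = {}})"

definition induced :: "'a graph \<Rightarrow> 'a set \<Rightarrow> 'a graph" where
  "induced G S = (verts G \<inter> S, {e \<in> edges G. e \<subseteq> S})"

definition is_cycle :: "'a graph \<Rightarrow> 'a list \<Rightarrow> bool" where
  "is_cycle G C \<longleftrightarrow> 3 \<le> length C \<and> distinct C \<and> set C \<subseteq> verts G \<and>
     (\<forall>i < length C. adj G (C ! i) (C ! (Suc i mod length C)))"

definition has_cycle :: "'a graph \<Rightarrow> bool" where
  "has_cycle G \<longleftrightarrow> (\<exists>C. is_cycle G C)"

definition same_comp :: "'a graph \<Rightarrow> 'a set \<Rightarrow> 'a \<Rightarrow> 'a \<Rightarrow> bool" where
  "same_comp G S a b \<longleftrightarrow> a \<in> verts G \<inter> S \<and> b \<in> verts G \<inter> S \<and> (adj (induced G S))\<^sup>*\<^sup>* a b"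

text \<open>A call naive-fvs(G,k,F) is represented by the configuration (G,k,F).\<close>
type_synonym 'a config = "'a graph \<times> int \<times> 'a set"

definition cgraph :: "'a config \<Rightarrow> 'a graph" where "cgraph c = fst c"
definition ck :: "'a config \<Rightarrow> int" where "ck c = fst (snd c)"
definition cF :: "'a config \<Rightarrow> 'a set" where "cF c = snd (snd c)"

text \<open>Step 0 does not terminate the call.\<close>
definition passes0 :: "int \<Rightarrow> 'a graph \<Rightarrow> bool" where
  "passes0 k G \<longleftrightarrow> 0 \<le> k \<and> verts G \<noteq> {}"

definition step1_applies :: "'a graph \<Rightarrow> bool" where
  "step1_applies G \<longleftrightarrow> (\<exists>v \<in> verts G. deg G v < 2)"

definition step2_cand :: "'a graph \<Rightarrow> 'a set \<Rightarrow> 'a \<Rightarrow> bool" where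
  "step2_cand G F v \<longleftrightarrow> v \<in> verts G - F \<and>
     (\<exists>a b. a \<noteq> b \<and> adj G v a \<and> adj G v b \<and> same_comp G F a b)"

definition step2_applies :: "'a graph \<Rightarrow> 'a set \<Rightarrow> bool" where
  "step2_applies G F \<longleftrightarrow> (\<exists>v. step2_cand G F v)"

definition step3_choice :: "'a graph \<Rightarrow> 'a set \<Rightarrow> 'a \<Rightarrow> bool" where
  "step3_choice G F v \<longleftrightarrow> v \<in> verts G - F \<and> (\<forall>w \<in> verts G - F. deg G w \<le> deg G v)"

text \<open>Events along an execution path: deletion in step 1, 2, 5, addition to F in step 6,
  and deletion in the loop of step 4 (of the last call).\<close>
datatype 'a act = Rm1 'a | Rm2 'a | Rm5 'a | Add6 'a | Rm4 'a

fun act_vertex :: "'a act \<Rightarrow> 'a" where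
  "act_vertex (Rm1 v) = v" | "act_vertex (Rm2 v) = v" | "act_vertex (Rm5 v) = v"
| "act_vertex (Add6 v) = v" | "act_vertex (Rm4 v) = v"

text \<open>Deletions contributing to V_- (steps 2, 5 and the loop of step 4).\<close>
fun is_del :: "'a act \<Rightarrow> bool" where
  "is_del (Rm1 _) = False" | "is_del (Rm2 _) = True" | "is_del (Rm5 _) = True"
| "is_del (Add6 _) = False" | "is_del (Rm4 _) = True"

fun call_step :: "'a config \<Rightarrow> 'a act \<Rightarrow> 'a config \<Rightarrow> bool" where
  "call_step (G, k, F) (Rm1 v) c' \<longleftrightarrow>
     passes0 k G \<and> v \<in> verts G \<and> deg G v < 2 \<and> c' = (del G {v}, k, F - {v})"
| "call_step (G, k, F) (Rm2 v) c' \<longleftrightarrow>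
     passes0 k G \<and> \<not> step1_applies G \<and> step2_cand G F v \<and> c' = (del G {v}, k - 1, F)"
| "call_step (G, k, F) (Rm5 v) c' \<longleftrightarrow>
     passes0 k G \<and> \<not> step1_applies G \<and> \<not> step2_applies G F \<and> step3_choice G F v \<and>
     deg G v \<noteq> 2 \<and> c' = (del G {v}, k - 1, F)"
| "call_step (G, k, F) (Add6 v) c' \<longleftrightarrow>
     passes0 k G \<and> \<not> step1_applies G \<and> \<not> step2_applies G F \<and> step3_choice G F v \<and>
     deg G v \<noteq> 2 \<and> c' = (G, k, F \<union> {v})"
| "call_step (G, k, F) (Rm4 v) c' \<longleftrightarrow> False"

fun halts0 :: "'a config \<Rightarrow> bool" where
  "halts0 (G, k, F) \<longleftrightarrow> \<not> passes0 k G"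

fun reaches4 :: "'a config \<Rightarrow> bool" where
  "reaches4 (G, k, F) \<longleftrightarrow> passes0 k G \<and> \<not> step1_applies G \<and> \<not> step2_applies G F \<and>
     (\<exists>v. step3_choice G F v \<and> deg G v = 2)"

fun loop_step :: "'a config \<Rightarrow> 'a act \<Rightarrow> 'a config \<Rightarrow> bool" where
  "loop_step (G, k, F) (Rm4 x) c' \<longleftrightarrow>
     x \<notin> F \<and> (\<exists>C. is_cycle G C \<and> x \<in> set C) \<and> c' = (del G {x}, k, F)"
| "loop_step _ _ _ \<longleftrightarrow> False"

text \<open>An execution path: cs ! j for j \<le> t are the calls c_0..c_t; es ! j (j < t) is the
  recursion made by c_j; es ! j (t \<le> j) are the deletions of the step-4 loop of c_t, and
  cs ! j (t < j) are the intermediate states of that loop.  Thus cs ! j is always the current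
  state immediately before event es ! j, and cs ! (length es) is the state at the end.\<close>
definition exec_path :: "'a graph \<Rightarrow> int \<Rightarrow> 'a config list \<Rightarrow> 'a act list \<Rightarrow> nat \<Rightarrow> bool" where
  "exec_path G k cs es t \<longleftrightarrow>
     length cs = Suc (length es) \<and> t \<le> length es \<and> cs ! 0 = (G, k, {}) \<and>
     (\<forall>j < t. call_step (cs ! j) (es ! j) (cs ! Suc j)) \<and>
     (\<forall>j. t \<le> j \<and> j < length es \<longrightarrow> loop_step (cs ! j) (es ! j) (cs ! Suc j)) \<and>
     ((halts0 (cs ! t) \<and> t = length es) \<or>
      (reaches4 (cs ! t) \<and> \<not> has_cycle (cgraph (cs ! length es))))"

text \<open>The last call c_t returns a set (not NO).\<close>
definition returns_set :: "'a config list \<Rightarrow> 'a act list \<Rightarrow> nat \<Rightarrow> bool" where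
  "returns_set cs es t \<longleftrightarrow>
     (halts0 (cs ! t) \<and> 0 \<le> ck (cs ! t) \<and> verts (cgraph (cs ! t)) = {}) \<or>
     (reaches4 (cs ! t) \<and> int (length es - t) \<le> ck (cs ! t))"

text \<open>Index of the next V_- deletion after event j (or the end of the path):
  if es ! j deletes x_i then cs ! (next_del es j) carries G_{i+1}.\<close>
definition next_del :: "'a act list \<Rightarrow> nat \<Rightarrow> nat" where
  "next_del es j = (LEAST j'. j < j' \<and> (j' = length es \<or> (j' < length es \<and> is_del (es ! j'))))"

definition dstar :: "'a config list \<Rightarrow> 'a act list \<Rightarrow> nat \<Rightarrow> nat" where
  "dstar cs es j = deg (cgraph (cs ! j)) (act_vertex (es ! j))"

text \<open>Effective decrements delta(u, x_i) where x_i is deleted at event index i.\<close>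
definition delta :: "'a config list \<Rightarrow> 'a act list \<Rightarrow> 'a \<Rightarrow> nat \<Rightarrow> int" where
  "delta cs es u i =
     (if u \<in> cF (cs ! i)
      then int (max (deg (cgraph (cs ! i)) u) 2) - int (max (deg (cgraph (cs ! next_del es i)) u) 2)
      else 0)"

end

theory Submission
  imports Defs
begin

text \<open>A positive effective decrement of \<open>u\<close> by \<open>x\<^sub>i\<close> requires \<open>u \<in> F\<^sub>i\<close>. Vertices only
  leave the graph and vertices of \<open>F\<close> stay in \<open>F\<close> while they survive, so \<open>u\<close>, which was outside
  \<open>F\<close> when it was moved there, must have been moved before \<open>x\<^sub>i\<close> was deleted; and \<open>x\<^sub>i\<close>, never in
  \<open>F\<close>, was then a candidate of step 3. Hence \<open>d\<^sup>*(u)\<close> is at least the degree of \<open>x\<^sub>i\<close> at that time,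
  which is at least \<open>d\<^sup>*(x\<^sub>i)\<close> because degrees only decrease along the path.\<close>

definition subgraph :: "'a graph \<Rightarrow> 'a graph \<Rightarrow> bool" where
  "subgraph H G \<longleftrightarrow> verts H \<subseteq> verts G \<and> edges H \<subseteq> edges G"

lemma finite_edges_if_wf_graph:
  assumes "wf_graph G"
  shows "finite (edges G)"
proof (rule finite_subset)
  show "edges G \<subseteq> Pow (verts G)" using assms unfolding wf_graph_def by auto
  show "finite (Pow (verts G))" using assms unfolding wf_graph_def by simp
qed

lemma deg_subgraph_le:
  assumes "subgraph H G" and "finite (edges G)"
  shows "deg H v \<le> deg G v"
proof (cases "v \<in> verts H")
  case True
  have "card {e \<in> edges H. v \<in> e} \<le> card {e \<in> edges G. v \<in> e}"
    by (rule card_mono) (use assms in \<open>auto simp: subgraph_def\<close>)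
  with True assms(1) show ?thesis by (auto simp: deg_def subgraph_def)
qed (simp add: deg_def)

definition config_descends :: "'a config \<Rightarrow> 'a config \<Rightarrow> bool" where
  "config_descends c c' \<longleftrightarrow>
     subgraph (cgraph c') (cgraph c) \<and> cF c \<inter> verts (cgraph c') \<subseteq> cF c'"

lemma config_descends_refl: "config_descends c c"
  by (auto simp: config_descends_def subgraph_def)

lemma config_descends_trans:
  "config_descends c c' \<Longrightarrow> config_descends c' c'' \<Longrightarrow> config_descends c c''"
  by (auto simp: config_descends_def subgraph_def)

lemma config_descends_if_step:
  assumes "call_step c e c' \<or> loop_step c e c'"
  shows "config_descends c c'"
proof -
  obtain G k F where "c = (G, k, F)" by (cases c)
  with assms show ?thesis
    by (cases e) (auto simp: config_descends_def subgraph_def cgraph_def cF_def del_def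
        verts_def edges_def)
qed

lemma exec_path_step:
  assumes "exec_path G k cs es t" and "m < length es"
  shows "call_step (cs ! m) (es ! m) (cs ! Suc m) \<or> loop_step (cs ! m) (es ! m) (cs ! Suc m)"
  using assms unfolding exec_path_def by (cases "m < t") auto

lemma exec_path_descends:
  assumes "exec_path G k cs es t" and "m \<le> n" and "n \<le> length es"
  shows "config_descends (cs ! m) (cs ! n)"
  using assms(2,3)
proof (induction n rule: dec_induct)
  case base
  show ?case by (rule config_descends_refl)
next
  case (step p)
  then have "p < length es" by simp
  then have "config_descends (cs ! p) (cs ! Suc p)"
    by (rule config_descends_if_step[OF exec_path_step[OF assms(1)]])
  with step show ?case using config_descends_trans by simp
qed

lemma exec_path_finite_edges:
  assumes "exec_path G k cs es t" and "wf_graph G" and "n \<le> length es"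
  shows "finite (edges (cgraph (cs ! n)))"
proof (rule finite_subset)
  have "cs ! 0 = (G, k, {})" using assms(1) by (simp add: exec_path_def)
  then show "edges (cgraph (cs ! n)) \<subseteq> edges G"
    using exec_path_descends[OF assms(1) _ assms(3), of 0]
    by (simp add: config_descends_def subgraph_def cgraph_def)
  show "finite (edges G)" using assms(2) by (rule finite_edges_if_wf_graph)
qed

lemma exec_path_deleted_vertex:
  assumes "exec_path G k cs es t" and "i < length es" and "is_del (es ! i)"
  shows "act_vertex (es ! i) \<in> verts (cgraph (cs ! i)) - cF (cs ! i)"
proof -
  obtain G' k' F' where "cs ! i = (G', k', F')" by (cases "cs ! i")
  with exec_path_step[OF assms(1,2)] assms(3) show ?thesis
    by (cases "es ! i") (auto simp: cgraph_def cF_def step2_cand_def step3_choice_def is_cycle_def)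
qed

lemma exec_path_added_vertex:
  assumes "exec_path G k cs es t" and "j < length es" and "es ! j = Add6 u"
  shows "step3_choice (cgraph (cs ! j)) (cF (cs ! j)) u"
proof -
  obtain G' k' F' where "cs ! j = (G', k', F')" by (cases "cs ! j")
  with exec_path_step[OF assms(1,2)] assms(3) show ?thesis
    by (auto simp: cgraph_def cF_def)
qed

theorem mainTheorem4:
  fixes G :: "'a graph" and k :: int and cs :: "'a config list" and es :: "'a act list"
    and t :: nat and u :: 'a and j i :: nat
  assumes "wf_graph G"
    and "exec_path G k cs es t"
    and "returns_set cs es t"
    and "j < length es" and "es ! j = Add6 u"
    and "i < length es" and "is_del (es ! i)"
    and "delta cs es u i > 0"
  shows "dstar cs es j \<ge> dstar cs es i"
proof -
  define x where "x = act_vertex (es ! i)"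
  have u_in_Fi: "u \<in> cF (cs ! i)" using assms(8) by (auto simp: delta_def split: if_splits)
  have choice: "step3_choice (cgraph (cs ! j)) (cF (cs ! j)) u"
    using exec_path_added_vertex[OF assms(2,4,5)] .
  have x_del: "x \<in> verts (cgraph (cs ! i)) - cF (cs ! i)"
    unfolding x_def using exec_path_deleted_vertex[OF assms(2,6,7)] .
  have "j < i"
  proof (rule ccontr)
    assume "\<not> j < i"
    with assms(5,7) have "i \<le> j" by (cases "i = j") auto
    with exec_path_descends[OF assms(2)] assms(4)
    have "cF (cs ! i) \<inter> verts (cgraph (cs ! j)) \<subseteq> cF (cs ! j)"
      by (simp add: config_descends_def)
    with choice u_in_Fi show False by (auto simp: step3_choice_def)
  qed
  then have descends: "config_descends (cs ! j) (cs ! i)"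
    using exec_path_descends[OF assms(2)] assms(6) by simp
  have "deg (cgraph (cs ! i)) x \<le> deg (cgraph (cs ! j)) x"
    using descends exec_path_finite_edges[OF assms(2,1)] assms(4)
    by (simp add: config_descends_def deg_subgraph_le)
  also have "\<dots> \<le> deg (cgraph (cs ! j)) u"
    using choice x_del descends by (auto simp: step3_choice_def config_descends_def subgraph_def)
  finally show ?thesis by (simp add: dstar_def x_def[symmetric] assms(5))
qed

end
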